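(* Let $W\subset\mathbb{R}$ have no isolated points and satisfy $0\in W$. Let $\Psi:\mathbb{R}\to\mathbb{R}$ be $C^\infty$ on some open interval $I$ and not equal to a polynomial on $I$. Then for each integer $n\ge0$ the function $x\mapsto x^n$ can be approximated uniformly on every compact subset of $\mathbb{R}$ by elements of $\mathcal{N}_1(\Psi,W,I)=\mathrm{span}\{x\mapsto\Psi(wx+b):w\in W,\ b\in I\}$. In particular, $\mathcal{N}_1(\Psi,W,I)$ is dense in $C(\mathbb{R})$ in the sense of uniform convergence on compact sets.
   Context: A set $S$ of functions $\mathbb{R}\to\mathbb{R}$ is dense in $C(\mathbb{R})$ in the sense of uniform convergence on compact sets if for every nonempty compact $K\subset\mathbb{R}$, every $g\in C(\mathbb{R})$ and every $\varepsilon>0$ there is $s\in S$ with $\sup_{x\in K}|s(x)-g(x)|<\varepsilon$. "$W$ has no isolated points" means every point of $W$ is a limit of points of $W\setminus\{w\}$. *)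

theory Defs
  imports "HOL-Analysis.Analysis" "HOL-Computational_Algebra.Polynomial"
begin

definition smooth_on :: "real set \<Rightarrow> (real \<Rightarrow> real) \<Rightarrow> bool" where
  "smooth_on I f \<longleftrightarrow> (\<forall>k::nat. \<forall>x\<in>I. ((deriv ^^ k) f) differentiable (at x))"

definition polynomial_on :: "real set \<Rightarrow> (real \<Rightarrow> real) \<Rightarrow> bool" where
  "polynomial_on I f \<longleftrightarrow> (\<exists>p :: real poly. \<forall>x\<in>I. f x = poly p x)"

definition N1 :: "(real \<Rightarrow> real) \<Rightarrow> real set \<Rightarrow> real set \<Rightarrow> (real \<Rightarrow> real) set" where
  "N1 \<Psi> W I = {f. \<exists>(n::nat) (c::nat \<Rightarrow> real) (w::nat \<Rightarrow> real) (b::nat \<Rightarrow> real).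
      (\<forall>i<n. w i \<in> W \<and> b i \<in> I) \<and> f = (\<lambda>x. \<Sum>i<n. c i * \<Psi> (w i * x + b i))}"

text \<open>sup over K of |s - g| is < e (sup bounded by some d < e).\<close>
definition unif_close_on :: "real set \<Rightarrow> (real \<Rightarrow> real) \<Rightarrow> (real \<Rightarrow> real) \<Rightarrow> real \<Rightarrow> bool" where
  "unif_close_on K s g e \<longleftrightarrow> (\<exists>d<e. \<forall>x\<in>K. \<bar>s x - g x\<bar> \<le> d)"

end

theory Submission
  imports Defs
begin

(* The functions approximable by N1(Psi,W,I) uniformly on a compact set K form a linear space
   closed under uniform limits. Since W has no isolated points, the difference quotient
   (Psi(w x + b) - Psi(w0 x + b)) / (w - w0) is available for w close to w0, and it tends
   uniformly on K to x Psi'(w0 x + b); iterating, x^k Psi^(k)(w0 x + b) is approximable.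
   Taking w0 = 0 and b in I with Psi^(k)(b) \<noteq> 0, which exists because a smooth function whose
   k-th derivative vanishes on an interval is a polynomial there (Taylor), shows that x^k is
   approximable. The Weierstrass theorem then gives all continuous functions. *)

definition approximable_on :: "real set \<Rightarrow> (real \<Rightarrow> real) set \<Rightarrow> (real \<Rightarrow> real) \<Rightarrow> bool" where
  "approximable_on K S f \<longleftrightarrow> (\<forall>e>0. \<exists>s\<in>S. \<forall>x\<in>K. \<bar>s x - f x\<bar> \<le> e)"

lemma approximable_on_mem: "f \<in> S \<Longrightarrow> approximable_on K S f"
  unfolding approximable_on_def by force

lemma approximable_on_uniform_limit:
  assumes "\<And>e. e > 0 \<Longrightarrow> \<exists>f. approximable_on K S f \<and> (\<forall>x\<in>K. \<bar>f x - g x\<bar> \<le> e)"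
  shows "approximable_on K S g"
  unfolding approximable_on_def
proof (intro allI impI)
  fix e :: real assume "e > 0"
  then obtain f where f: "approximable_on K S f" "\<forall>x\<in>K. \<bar>f x - g x\<bar> \<le> e/2"
    using assms[of "e/2"] by auto
  then obtain s where s: "s \<in> S" "\<forall>x\<in>K. \<bar>s x - f x\<bar> \<le> e/2"
    using \<open>e > 0\<close> unfolding approximable_on_def by (meson half_gt_zero)
  have "\<bar>s x - g x\<bar> \<le> e" if "x \<in> K" for x
  proof -
    have "\<bar>s x - f x\<bar> \<le> e/2" "\<bar>f x - g x\<bar> \<le> e/2" using f(2) s(2) that by auto
    then show ?thesis by linarith
  qed
  with s(1) show "\<exists>s\<in>S. \<forall>x\<in>K. \<bar>s x - g x\<bar> \<le> e" by blast
qed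

lemma approximable_on_imp_unif_close_on:
  assumes "approximable_on K S g" "e > 0"
  shows "\<exists>s\<in>S. unif_close_on K s g e"
proof -
  obtain s where "s \<in> S" "\<forall>x\<in>K. \<bar>s x - g x\<bar> \<le> e/2"
    using assms unfolding approximable_on_def by (meson half_gt_zero)
  moreover have "e/2 < e" using \<open>e > 0\<close> by simp
  ultimately show ?thesis unfolding unif_close_on_def by blast
qed

locale linear_function_space =
  fixes S :: "(real \<Rightarrow> real) set"
  assumes zero_mem: "(\<lambda>x. 0) \<in> S"
    and add_mem: "s \<in> S \<Longrightarrow> t \<in> S \<Longrightarrow> (\<lambda>x. s x + t x) \<in> S"
    and scale_mem: "s \<in> S \<Longrightarrow> (\<lambda>x. c * s x) \<in> S"
begin

lemma approximable_on_add:
  assumes f: "approximable_on K S f" and g: "approximable_on K S g"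
  shows "approximable_on K S (\<lambda>x. f x + g x)"
  unfolding approximable_on_def
proof (intro allI impI)
  fix e :: real assume "e > 0"
  then obtain s t where st: "s \<in> S" "t \<in> S"
    "\<forall>x\<in>K. \<bar>s x - f x\<bar> \<le> e/2" "\<forall>x\<in>K. \<bar>t x - g x\<bar> \<le> e/2"
    using f g unfolding approximable_on_def by (meson half_gt_zero)
  have "\<bar>(s x + t x) - (f x + g x)\<bar> \<le> e" if "x \<in> K" for x
  proof -
    have "\<bar>s x - f x\<bar> \<le> e/2" "\<bar>t x - g x\<bar> \<le> e/2" using st(3,4) that by auto
    then show ?thesis by linarith
  qed
  with st(1,2) show "\<exists>u\<in>S. \<forall>x\<in>K. \<bar>u x - (f x + g x)\<bar> \<le> e"
    by (intro bexI[of _ "\<lambda>x. s x + t x"] add_mem) auto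
qed

lemma approximable_on_scale:
  assumes f: "approximable_on K S f"
  shows "approximable_on K S (\<lambda>x. c * f x)"
  unfolding approximable_on_def
proof (intro allI impI)
  fix e :: real assume "e > 0"
  then have "e / (\<bar>c\<bar> + 1) > 0" by (simp add: add_pos_nonneg)
  then obtain s where s: "s \<in> S" "\<forall>x\<in>K. \<bar>s x - f x\<bar> \<le> e / (\<bar>c\<bar> + 1)"
    using f unfolding approximable_on_def by blast
  have "\<bar>c * s x - c * f x\<bar> \<le> e" if "x \<in> K" for x
  proof -
    have "\<bar>c * s x - c * f x\<bar> = \<bar>c\<bar> * \<bar>s x - f x\<bar>"
      by (simp add: abs_mult right_diff_distrib[symmetric])
    also have "\<dots> \<le> (\<bar>c\<bar> + 1) * (e / (\<bar>c\<bar> + 1))"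
      using s(2) that by (intro mult_mono) auto
    also have "\<dots> = e" by (simp add: add_pos_nonneg)
    finally show ?thesis .
  qed
  with s(1) show "\<exists>u\<in>S. \<forall>x\<in>K. \<bar>u x - c * f x\<bar> \<le> e"
    by (intro bexI[of _ "\<lambda>x. c * s x"] scale_mem) auto
qed

lemma approximable_on_diff:
  assumes "approximable_on K S f" "approximable_on K S g"
  shows "approximable_on K S (\<lambda>x. f x - g x)"
  using approximable_on_add[OF assms(1) approximable_on_scale[OF assms(2), of "-1"]] by simp

lemma approximable_on_sum:
  assumes "finite A" "\<And>i. i \<in> A \<Longrightarrow> approximable_on K S (f i)"
  shows "approximable_on K S (\<lambda>x. \<Sum>i\<in>A. f i x)"
  using assms
  by (induction A rule: finite_induct) (auto intro: approximable_on_mem zero_mem approximable_on_add)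

lemma approximable_on_continuous:
  assumes K: "compact K" and g: "continuous_on K g"
    and powers: "\<And>n. approximable_on K S (\<lambda>x. x ^ n)"
  shows "approximable_on K S g"
proof (rule approximable_on_uniform_limit)
  fix e :: real assume "e > 0"
  then obtain p where p: "real_polynomial_function p" "\<And>x. x \<in> K \<Longrightarrow> \<bar>g x - p x\<bar> < e"
    using Stone_Weierstrass_real_polynomial_function[OF K g] by blast
  then obtain a n where "p = (\<lambda>x. \<Sum>i\<le>n. a i * x ^ i)"
    using real_polynomial_function_imp_sum by blast
  then have "approximable_on K S p"
    by (simp, intro approximable_on_sum approximable_on_scale powers) auto
  with p(2) show "\<exists>f. approximable_on K S f \<and> (\<forall>x\<in>K. \<bar>f x - g x\<bar> \<le> e)"
    by (metis abs_minus_commute less_eq_real_def)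
qed

end

lemma smooth_on_higher_deriv_has_derivative:
  assumes "smooth_on I f" "x \<in> I"
  shows "((deriv ^^ k) f has_real_derivative (deriv ^^ Suc k) f x) (at x)"
proof -
  have "(deriv ^^ k) f differentiable at x" using assms unfolding smooth_on_def by blast
  then show ?thesis by (simp add: DERIV_deriv_iff_real_differentiable)
qed

lemma smooth_on_continuous_on_higher_deriv:
  "smooth_on I f \<Longrightarrow> continuous_on I ((deriv ^^ k) f)"
  by (meson DERIV_isCont continuous_at_imp_continuous_on smooth_on_higher_deriv_has_derivative)

lemma polynomial_on_if_higher_deriv_vanishes:
  assumes I: "is_interval I" and smooth: "smooth_on I f"
    and vanish: "\<And>x. x \<in> I \<Longrightarrow> (deriv ^^ n) f x = 0"
  shows "polynomial_on I f"
proof (cases "n = 0 \<or> I = {}")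
  case True
  then show ?thesis unfolding polynomial_on_def using vanish by (intro exI[of _ 0]) auto
next
  case False
  then obtain c where c: "c \<in> I" and "n > 0" by blast
  define p where "p = (\<Sum>m<n. smult ((deriv ^^ m) f c / fact m) ([:- c, 1:] ^ m))"
  have poly_p: "poly p x = (\<Sum>m<n. (deriv ^^ m) f c / fact m * (x - c) ^ m)" for x
    by (simp add: p_def poly_sum)
  have "f x = poly p x" if x: "x \<in> I" for x
  proof (cases "x = c")
    case True
    have "(\<Sum>m<n. (deriv ^^ m) f c / fact m * 0 ^ m) = f c"
      using \<open>n > 0\<close> by (simp add: power_0_left if_distrib sum.If_cases lessThan_def)
    then show ?thesis using True by (simp add: poly_p)
  next
    case False
    have "\<forall>m t. m < n \<and> min c x \<le> t \<and> t \<le> max c x \<longrightarrow>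
        ((deriv ^^ m) f has_real_derivative (deriv ^^ Suc m) f t) (at t)"
      using mem_is_interval_1_I[OF I] c x smooth_on_higher_deriv_has_derivative[OF smooth]
      by (metis max_def min_def)
    then obtain t where t: "t \<in> open_segment c x"
      "f x = (\<Sum>m<n. (deriv ^^ m) f c / fact m * (x - c) ^ m) + (deriv ^^ n) f t / fact n * (x - c) ^ n"
      using Taylor[of n "\<lambda>m. (deriv ^^ m) f" f "min c x" "max c x" c x] \<open>n > 0\<close> False
      by (auto simp: open_segment_eq_real_ivl split: if_splits)
    have "t \<in> I"
      using t(1) c x I by (meson is_interval_convex open_closed_segment convex_contains_segment subsetD)
    then show ?thesis using t(2) vanish by (simp add: poly_p)
  qed
  then show ?thesis unfolding polynomial_on_def by blast
qed

lemma first_order_remainder_bound: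
  fixes D D' :: "real \<Rightarrow> real"
  assumes deriv: "\<And>z. z \<in> closed_segment y (y + h) \<Longrightarrow> (D has_real_derivative D' z) (at z)"
    and close: "\<And>z. z \<in> closed_segment y (y + h) \<Longrightarrow> \<bar>D' z - D' y\<bar> \<le> \<epsilon>"
  shows "\<bar>D (y + h) - D y - h * D' y\<bar> \<le> \<epsilon> * \<bar>h\<bar>"
proof -
  have "norm ((D (y + h) - (y + h) * D' y) - (D y - y * D' y)) \<le> \<epsilon> * norm ((y + h) - y)"
  proof (rule field_differentiable_bound[where f' = "\<lambda>z. D' z - D' y"])
    fix z assume z: "z \<in> closed_segment y (y + h)"
    have "((\<lambda>t. D t - t * D' y) has_real_derivative D' z - D' y) (at z)"
      using deriv[OF z] by (auto intro!: derivative_eq_intros)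
    then show "((\<lambda>t. D t - t * D' y) has_real_derivative D' z - D' y) (at z within closed_segment y (y + h))"
      by (rule has_field_derivative_at_within)
    show "norm (D' z - D' y) \<le> \<epsilon>" using close[OF z] by simp
  qed auto
  then show ?thesis by (simp add: algebra_simps)
qed

lemma uniform_first_order_approximation_on_compact:
  fixes D D' :: "real \<Rightarrow> real"
  assumes I: "open I" and T: "compact T" "T \<subseteq> I"
    and deriv: "\<And>z. z \<in> I \<Longrightarrow> (D has_real_derivative D' z) (at z)"
    and cont: "continuous_on I D'" and "\<epsilon> > 0"
  obtains \<delta> where "\<delta> > 0" "\<And>y h. y \<in> T \<Longrightarrow> \<bar>h\<bar> < \<delta> \<Longrightarrow> y + h \<in> I"
    "\<And>y h. y \<in> T \<Longrightarrow> \<bar>h\<bar> < \<delta> \<Longrightarrow> \<bar>D (y + h) - D y - h * D' y\<bar> \<le> \<epsilon> * \<bar>h\<bar>"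
proof -
  obtain r where r: "r > 0" "(\<Union>t\<in>T. cball t r) \<subseteq> I"
    using compact_subset_open_imp_cball_epsilon_subset[OF T(1) I T(2)] by blast
  define L where "L = {t + z | t z. t \<in> T \<and> z \<in> cball 0 r}"
  have cball_L: "cball t r \<subseteq> L" if "t \<in> T" for t
  proof
    fix y assume "y \<in> cball t r"
    then have "y = t + (y - t)" "y - t \<in> cball 0 r" by (auto simp: dist_norm)
    then show "y \<in> L" unfolding L_def using that by blast
  qed
  have "L \<subseteq> I"
    unfolding L_def using r(2) by (force simp: dist_norm)
  moreover have "compact L"
    unfolding L_def by (intro compact_sums T(1) compact_cball)
  ultimately have "uniformly_continuous_on L D'"
    using cont by (meson compact_uniformly_continuous continuous_on_subset)
  then obtain \<eta> where \<eta>: "\<eta> > 0" "\<And>x x'. x \<in> L \<Longrightarrow> x' \<in> L \<Longrightarrow> dist x' x < \<eta> \<Longrightarrow> dist (D' x') (D' x) < \<epsilon>"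
    using \<open>\<epsilon> > 0\<close> unfolding uniformly_continuous_on_def by metis
  show ?thesis
  proof (rule that[of "min r \<eta>"])
    show "min r \<eta> > 0" using r(1) \<eta>(1) by simp
    fix y h assume y: "y \<in> T" and h: "\<bar>h\<bar> < min r \<eta>"
    have near: "z \<in> L" "dist z y < \<eta>" if "z \<in> closed_segment y (y + h)" for z
    proof -
      have "dist z y \<le> \<bar>h\<bar>" using dist_in_closed_segment[OF that] by (simp add: dist_real_def)
      then show "z \<in> L" "dist z y < \<eta>" using cball_L[OF y] h by (auto simp: dist_commute)
    qed
    show "y + h \<in> I" using r(2) y h by (force simp: dist_real_def)
    show "\<bar>D (y + h) - D y - h * D' y\<bar> \<le> \<epsilon> * \<bar>h\<bar>"
    proof (rule first_order_remainder_bound)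
      fix z assume z: "z \<in> closed_segment y (y + h)"
      show "(D has_real_derivative D' z) (at z)" using deriv near(1)[OF z] \<open>L \<subseteq> I\<close> by blast
      have "y \<in> L" using cball_L[OF y] r(1) by auto
      then show "\<bar>D' z - D' y\<bar> \<le> \<epsilon>" using \<eta>(2)[OF _ near[OF z]] by (simp add: dist_real_def)
    qed
  qed
qed

lemma power_difference_quotient_bound:
  fixes d x P Q E \<epsilon> :: real
  assumes "d \<noteq> 0" and "\<bar>P - Q - d * x * E\<bar> \<le> \<epsilon> * \<bar>d * x\<bar>"
  shows "\<bar>(x ^ k * P - x ^ k * Q) / d - x ^ Suc k * E\<bar> \<le> \<epsilon> * \<bar>x\<bar> ^ Suc k"
proof -
  have "(x ^ k * P - x ^ k * Q) / d - x ^ Suc k * E = x ^ k * (P - Q - d * x * E) / d"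
    using assms(1) by (simp add: field_simps)
  then have "\<bar>(x ^ k * P - x ^ k * Q) / d - x ^ Suc k * E\<bar> = \<bar>x\<bar> ^ k * \<bar>P - Q - d * x * E\<bar> / \<bar>d\<bar>"
    by (simp add: abs_mult power_abs)
  also have "\<dots> \<le> \<bar>x\<bar> ^ k * (\<epsilon> * \<bar>d * x\<bar>) / \<bar>d\<bar>"
    using assms(2) by (intro divide_right_mono mult_left_mono) auto
  also have "\<dots> = \<epsilon> * \<bar>x\<bar> ^ Suc k"
    using assms(1) by (simp add: abs_mult)
  finally show ?thesis .
qed

lemma (in linear_function_space) approximable_on_power_mult_deriv_step:
  fixes D D' :: "real \<Rightarrow> real"
  assumes I: "open I" and K: "compact K" and w0: "w0 \<in> W" "w0 islimpt W"
    and w0_K: "\<And>x. x \<in> K \<Longrightarrow> w0 * x + b \<in> I"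
    and deriv: "\<And>z. z \<in> I \<Longrightarrow> (D has_real_derivative D' z) (at z)" and cont: "continuous_on I D'"
    and approx: "\<And>w. w \<in> W \<Longrightarrow> (\<And>x. x \<in> K \<Longrightarrow> w * x + b \<in> I) \<Longrightarrow>
      approximable_on K S (\<lambda>x. x ^ k * D (w * x + b))"
  shows "approximable_on K S (\<lambda>x. x ^ Suc k * D' (w0 * x + b))"
proof -
  define T where "T = (\<lambda>x. w0 * x + b) ` K"
  have T: "compact T" "T \<subseteq> I"
    unfolding T_def using K w0_K by (auto intro!: compact_continuous_image continuous_intros)
  obtain R where R: "R > 0" "\<And>x. x \<in> K \<Longrightarrow> \<bar>x\<bar> \<le> R"
    using compact_imp_bounded[OF K] bounded_pos by (metis real_norm_def)
  show ?thesis
  proof (rule approximable_on_uniform_limit)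
    fix e :: real assume "e > 0"
    then have "e / R ^ Suc k > 0" using R(1) by simp
    then obtain \<delta> where \<delta>: "\<delta> > 0" "\<And>y h. y \<in> T \<Longrightarrow> \<bar>h\<bar> < \<delta> \<Longrightarrow> y + h \<in> I"
      "\<And>y h. y \<in> T \<Longrightarrow> \<bar>h\<bar> < \<delta> \<Longrightarrow> \<bar>D (y + h) - D y - h * D' y\<bar> \<le> e / R ^ Suc k * \<bar>h\<bar>"
      using uniform_first_order_approximation_on_compact[OF I T deriv cont] by metis
    obtain w where w: "w \<in> W" "w \<noteq> w0" "dist w w0 < \<delta> / R"
      using w0(2) \<delta>(1) R(1) unfolding islimpt_approachable by (metis divide_pos_pos)
    have small: "\<bar>(w - w0) * x\<bar> < \<delta>" if "x \<in> K" for x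
    proof -
      have "\<bar>(w - w0) * x\<bar> \<le> \<bar>w - w0\<bar> * R" using R(2)[OF that] by (simp add: abs_mult mult_left_mono)
      also have "\<dots> < \<delta>" using w(3) R(1) by (simp add: dist_real_def field_simps)
      finally show ?thesis .
    qed
    have shift: "w * x + b = (w0 * x + b) + (w - w0) * x" for x by algebra
    have "w * x + b \<in> I" if "x \<in> K" for x
      unfolding shift using \<delta>(2) small that by (auto simp: T_def)
    then have "approximable_on K S (\<lambda>x. 1 / (w - w0) * (x ^ k * D (w * x + b) - x ^ k * D (w0 * x + b)))"
      using w(1) w0 w0_K by (intro approximable_on_scale approximable_on_diff approx)
    moreover have "\<bar>1 / (w - w0) * (x ^ k * D (w * x + b) - x ^ k * D (w0 * x + b))
        - x ^ Suc k * D' (w0 * x + b)\<bar> \<le> e" if "x \<in> K" for x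
    proof -
      have "\<bar>D (w * x + b) - D (w0 * x + b) - (w - w0) * x * D' (w0 * x + b)\<bar>
          \<le> e / R ^ Suc k * \<bar>(w - w0) * x\<bar>"
        unfolding shift using \<delta>(3) small that by (auto simp: T_def)
      then have "\<bar>(x ^ k * D (w * x + b) - x ^ k * D (w0 * x + b)) / (w - w0)
          - x ^ Suc k * D' (w0 * x + b)\<bar> \<le> e / R ^ Suc k * \<bar>x\<bar> ^ Suc k"
        using w(2) by (intro power_difference_quotient_bound) auto
      also have "\<dots> \<le> e / R ^ Suc k * R ^ Suc k"
        using R that \<open>e / R ^ Suc k > 0\<close> by (intro mult_left_mono power_mono) auto
      finally show ?thesis using R(1) by simp
    qed
    ultimately show "\<exists>f. approximable_on K S f \<and> (\<forall>x\<in>K. \<bar>f x - x ^ Suc k * D' (w0 * x + b)\<bar> \<le> e)"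
      by blast
  qed
qed

lemma N1_basis_mem: "w \<in> W \<Longrightarrow> b \<in> I \<Longrightarrow> (\<lambda>x. \<Psi> (w * x + b)) \<in> N1 \<Psi> W I"
  unfolding N1_def
  by (rule CollectI, rule exI[of _ 1], rule exI[of _ "\<lambda>_. 1"], rule exI[of _ "\<lambda>_. w"],
      rule exI[of _ "\<lambda>_. b"]) simp

interpretation N1: linear_function_space "N1 \<Psi> W I" for \<Psi> W I
proof
  show "(\<lambda>x. 0) \<in> N1 \<Psi> W I"
    unfolding N1_def by (auto intro!: exI[of _ "0::nat"])
next
  fix s c assume "s \<in> N1 \<Psi> W I"
  then obtain n :: nat and a w b where "\<forall>i<n. w i \<in> W \<and> b i \<in> I"
    and "s = (\<lambda>x. \<Sum>i<n. a i * \<Psi> (w i * x + b i))"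
    unfolding N1_def by blast
  then show "(\<lambda>x. c * s x) \<in> N1 \<Psi> W I"
    unfolding N1_def
    by (intro CollectI exI[of _ n] exI[of _ "\<lambda>i. c * a i"] exI[of _ w] exI[of _ b])
      (simp add: sum_distrib_left mult.assoc)
next
  fix s t assume "s \<in> N1 \<Psi> W I" "t \<in> N1 \<Psi> W I"
  then obtain n m :: nat and a w b a' w' b'
    where hyps: "\<forall>i<n. w i \<in> W \<and> b i \<in> I" "\<forall>i<m. w' i \<in> W \<and> b' i \<in> I"
      and s: "s = (\<lambda>x. \<Sum>i<n. a i * \<Psi> (w i * x + b i))"
      and t: "t = (\<lambda>x. \<Sum>i<m. a' i * \<Psi> (w' i * x + b' i))"
    unfolding N1_def by blast
  define join :: "(nat \<Rightarrow> real) \<Rightarrow> (nat \<Rightarrow> real) \<Rightarrow> nat \<Rightarrow> real"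
    where "join u v i = (if i < n then u i else v (i - n))" for u v i
  have split: "(\<Sum>i<n + m. F i) = (\<Sum>i<n. F i) + (\<Sum>i<m. F (n + i))" for F :: "nat \<Rightarrow> real"
    by (induction m) (simp_all add: add.assoc)
  have "\<forall>i<n + m. join w w' i \<in> W \<and> join b b' i \<in> I"
    using hyps by (auto simp: join_def)
  moreover have "(\<lambda>x. s x + t x) = (\<lambda>x. \<Sum>i<n + m. join a a' i * \<Psi> (join w w' i * x + join b b' i))"
    by (simp add: split s t join_def)
  ultimately show "(\<lambda>x. s x + t x) \<in> N1 \<Psi> W I"
    unfolding N1_def by blast
qed

lemma N1_approximable_on_power_mult_higher_deriv:
  assumes W: "\<forall>w\<in>W. w islimpt W" and I: "open I" and smooth: "smooth_on I \<Psi>"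
    and K: "compact K" and b: "b \<in> I"
  shows "w0 \<in> W \<Longrightarrow> (\<And>x. x \<in> K \<Longrightarrow> w0 * x + b \<in> I) \<Longrightarrow>
    approximable_on K (N1 \<Psi> W I) (\<lambda>x. x ^ k * (deriv ^^ k) \<Psi> (w0 * x + b))"
proof (induction k arbitrary: w0)
  case 0
  then show ?case by (simp add: approximable_on_mem N1_basis_mem b)
next
  case (Suc k)
  show ?case
    by (rule N1.approximable_on_power_mult_deriv_step[OF I K Suc.prems(1) _ Suc.prems(2)
          smooth_on_higher_deriv_has_derivative[OF smooth] smooth_on_continuous_on_higher_deriv[OF smooth]
          Suc.IH])
      (use W Suc.prems(1) in blast)
qed

theorem lemma4p1p5:
  fixes W I :: "real set" and \<Psi> :: "real \<Rightarrow> real"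
  assumes W_perfect: "\<forall>w\<in>W. w islimpt W"
    and zero_W: "0 \<in> W"
    and I_open: "open I" and I_interval: "is_interval I" and I_ne: "I \<noteq> {}"
    and smooth: "smooth_on I \<Psi>"
    and nonpoly: "\<not> polynomial_on I \<Psi>"
  shows "(\<forall>n::nat. \<forall>K. compact K \<and> K \<noteq> {} \<longrightarrow> (\<forall>e>0.
            \<exists>s\<in>N1 \<Psi> W I. unif_close_on K s (\<lambda>x. x ^ n) e))
       \<and> (\<forall>g. continuous_on UNIV g \<longrightarrow> (\<forall>K. compact K \<and> K \<noteq> {} \<longrightarrow> (\<forall>e>0.
            \<exists>s\<in>N1 \<Psi> W I. unif_close_on K s g e)))"
proof -
  have powers: "approximable_on K (N1 \<Psi> W I) (\<lambda>x. x ^ n)" if K: "compact K" for K n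
  proof -
    obtain b where b: "b \<in> I" "(deriv ^^ n) \<Psi> b \<noteq> 0"
      using polynomial_on_if_higher_deriv_vanishes[OF I_interval smooth] nonpoly by blast
    have "approximable_on K (N1 \<Psi> W I) (\<lambda>x. x ^ n * (deriv ^^ n) \<Psi> (0 * x + b))"
      using N1_approximable_on_power_mult_higher_deriv[OF W_perfect I_open smooth K b(1) zero_W] b(1)
      by simp
    then have "approximable_on K (N1 \<Psi> W I) (\<lambda>x. 1 / (deriv ^^ n) \<Psi> b * (x ^ n * (deriv ^^ n) \<Psi> (0 * x + b)))"
      by (rule N1.approximable_on_scale)
    then show ?thesis using b(2) by simp
  qed
  show ?thesis
    using powers N1.approximable_on_continuous approximable_on_imp_unif_close_on
    by (meson continuous_on_subset subset_UNIV)
qed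

end
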